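(* There exists $n_0$ such that for all $n\ge n_0$, $\mathrm{ex}(n,S_4,K_4)=\mathcal{N}(S_4,T_3(n))$; that is, $S_4$ is $4$-Tur\'an-good.
   Context: $S_4$ is the star on $4$ vertices (a center with three leaves). $T_3(n)$ is the complete $3$-partite graph on $n$ vertices with part sizes $\lfloor n/3\rfloor$ or $\lceil n/3\rceil$. For graphs $H,G$, $\mathcal{N}(H,G)$ is the number of subgraphs of $G$ isomorphic to $H$, and $\mathrm{ex}(n,H,F)$ is the maximum of $\mathcal{N}(H,G)$ over $F$-free graphs $G$ on $n$ vertices. A graph $H$ is $k$-Tur\'an-good if $\mathrm{ex}(n,H,K_k)=\mathcal{N}(H,T_{k-1}(n))$ for all sufficiently large $n$. *)

theory Defs
  imports Main
begin

type_synonym 'a graph = "'a set \<times> 'a set set"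

definition simple_graph :: "'a graph \<Rightarrow> bool" where
  "simple_graph G \<longleftrightarrow> finite (fst G) \<and> (\<forall>e\<in>snd G. e \<subseteq> fst G \<and> card e = 2)"

definition subgraph :: "'a graph \<Rightarrow> 'a graph \<Rightarrow> bool" where
  "subgraph G' G \<longleftrightarrow> simple_graph G' \<and> fst G' \<subseteq> fst G \<and> snd G' \<subseteq> snd G"

definition graph_iso :: "'a graph \<Rightarrow> 'b graph \<Rightarrow> bool" where
  "graph_iso G H \<longleftrightarrow> (\<exists>f. bij_betw f (fst G) (fst H) \<and> (\<lambda>e. f ` e) ` snd G = snd H)"

definition num_copies :: "'b graph \<Rightarrow> 'a graph \<Rightarrow> nat" where
  "num_copies H G = card {G'. subgraph G' G \<and> graph_iso G' H}"

definition free_of :: "'b graph \<Rightarrow> 'a graph \<Rightarrow> bool" where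
  "free_of F G \<longleftrightarrow> \<not> (\<exists>G'. subgraph G' G \<and> graph_iso G' F)"

text \<open>ex(n,H,F): maximum of N(H,G) over F-free graphs G on n vertices
  (vertex set {0..<n}; every n-vertex graph is isomorphic to one of these).\<close>
definition gen_ex :: "nat \<Rightarrow> 'b graph \<Rightarrow> 'c graph \<Rightarrow> nat" where
  "gen_ex n H F = Max {num_copies H G | G :: nat graph.
      simple_graph G \<and> fst G = {..<n} \<and> free_of F G}"

definition complete_graph :: "nat \<Rightarrow> nat graph" where
  "complete_graph k = ({..<k}, {e. e \<subseteq> {..<k} \<and> card e = 2})"

definition star_graph :: "nat \<Rightarrow> nat graph" where
  "star_graph k = ({..<k}, {{0, i} | i. 0 < i \<and> i < k})"

text \<open>Turan graph T_r(n): vertices 0..n-1, vertex i lies in part (i mod r);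
  parts have sizes floor(n/r) or ceil(n/r); complete r-partite.\<close>
definition turan_graph :: "nat \<Rightarrow> nat \<Rightarrow> nat graph" where
  "turan_graph r n = ({..<n}, {{i, j} | i j. i < n \<and> j < n \<and> i mod r \<noteq> j mod r})"

end

theory Submission
  imports Defs Complex_Main
begin

text \<open>
  A copy of the star with three leaves is a vertex together with three of its neighbours, so
  N(S_4, G) is the sum of the binomial coefficients C(d(v), 3) over the vertices v.  By Erdos'
  degree-majorization argument, a K_4-free graph G admits a partition of its vertices into
  three parts such that every vertex has degree at most the number of vertices outside its
  own part: take a vertex x of maximum degree, put its non-neighbours into one part, and split
  the triangle-free neighbourhood of x recursively.  Hence N(S_4, G) is at most the number of
  stars in the complete 3-partite graph with these parts, i.e. a sum of the terms
  s C(n - s, 3) over the part sizes s.  Moving a vertex from a largest to a smallest part never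
  decreases this sum as long as these sizes differ by at least two, so it is maximal for the
  balanced partition, which is T_3(n).  The argument works for every n, so n0 = 0.
\<close>

section \<open>Cliques and isomorphic copies\<close>

definition neighbors :: "'a set set \<Rightarrow> 'a \<Rightarrow> 'a set" where
  "neighbors E v = {u. {v, u} \<in> E}"

definition clique :: "'a set set \<Rightarrow> 'a set \<Rightarrow> bool" where
  "clique E K \<longleftrightarrow> (\<forall>u\<in>K. \<forall>v\<in>K. u \<noteq> v \<longrightarrow> {u, v} \<in> E)"

lemma simple_graph_edgeD:
  assumes "simple_graph (V, E)" and "{u, v} \<in> E"
  shows "u \<in> V" "v \<in> V" "u \<noteq> v"
  using assms unfolding simple_graph_def by (auto simp: card_2_iff)

lemma neighbors_subset: "simple_graph (V, E) \<Longrightarrow> neighbors E v \<subseteq> V"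
  unfolding neighbors_def by (blast dest: simple_graph_edgeD(2))

lemma not_in_neighbors: "simple_graph (V, E) \<Longrightarrow> v \<notin> neighbors E v"
  unfolding neighbors_def by (blast dest: simple_graph_edgeD(3))

lemma finite_neighbors:
  assumes "simple_graph (V, E)"
  shows "finite (neighbors E v)"
  using finite_subset[OF neighbors_subset[OF assms]] assms unfolding simple_graph_def by simp

lemma clique_subset: "clique E K \<Longrightarrow> K' \<subseteq> K \<Longrightarrow> clique E K'"
  unfolding clique_def by blast

lemma clique_insert_center:
  assumes "clique E K" and "K \<subseteq> neighbors E x"
  shows "clique E (insert x K)"
  using assms unfolding clique_def neighbors_def by (auto simp: insert_commute)

lemma graph_iso_bij_image: "bij_betw f A B \<Longrightarrow> graph_iso (A, F) (B, (\<lambda>e. f ` e) ` F)"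
  unfolding graph_iso_def by auto

lemma graph_iso_sym:
  assumes "graph_iso G H" and "\<forall>e\<in>snd G. e \<subseteq> fst G"
  shows "graph_iso H G"
proof -
  obtain f where f: "bij_betw f (fst G) (fst H)" "(\<lambda>e. f ` e) ` snd G = snd H"
    using assms(1) unfolding graph_iso_def by blast
  have inj: "inj_on f (fst G)"
    using f(1) bij_betw_imp_inj_on by blast
  have "(\<lambda>e. inv_into (fst G) f ` e) ` snd H = (\<lambda>e. inv_into (fst G) f ` f ` e) ` snd G"
    unfolding f(2)[symmetric] image_image ..
  also have "\<dots> = (\<lambda>e. e) ` snd G"
    using assms(2) inv_into_image_cancel[OF inj] by (intro image_cong) auto
  finally show ?thesis
    unfolding graph_iso_def using bij_betw_inv_into[OF f(1)] by auto
qed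

lemma graph_iso_simple_graphE:
  assumes "graph_iso (V', E') H" and "simple_graph (V', E')"
  obtains g where "bij_betw g (fst H) V'" and "E' = (\<lambda>e. g ` e) ` snd H"
proof -
  have "graph_iso H (V', E')"
    using assms(2) unfolding simple_graph_def by (intro graph_iso_sym[OF assms(1)]) auto
  then show ?thesis
    using that unfolding graph_iso_def fst_conv snd_conv by blast
qed

lemma complete_graph_copy_imp_clique:
  assumes "subgraph (V', E') (V, E)" and "graph_iso (V', E') (complete_graph k)"
  shows "clique E V' \<and> card V' = k"
proof -
  have simple: "simple_graph (V', E')" and sub: "E' \<subseteq> E"
    using assms(1) unfolding subgraph_def by auto
  obtain g where g: "bij_betw g {..<k} V'"
    and E': "E' = (\<lambda>e. g ` e) ` {e. e \<subseteq> {..<k} \<and> card e = 2}"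
    using graph_iso_simple_graphE[OF assms(2) simple] unfolding complete_graph_def by auto
  have "clique E V'"
    unfolding clique_def
  proof (intro ballI impI)
    fix u v assume "u \<in> V'" "v \<in> V'" "u \<noteq> v"
    then obtain i j where "i < k" "j < k" "i \<noteq> j" "u = g i" "v = g j"
      using g unfolding bij_betw_def by auto
    then have "g ` {i, j} \<in> E'"
      unfolding E' by (intro imageI) auto
    then show "{u, v} \<in> E"
      using sub \<open>u = g i\<close> \<open>v = g j\<close> by auto
  qed
  then show ?thesis
    using bij_betw_same_card[OF g] by simp
qed

lemma clique_imp_complete_graph_copy:
  assumes G: "simple_graph (V, E)" and K: "K \<subseteq> V" "clique E K" "card K = k"
  shows "\<not> free_of (complete_graph k) (V, E)"
proof -
  have "finite K"
    using finite_subset[OF K(1)] G unfolding simple_graph_def by simp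
  then obtain h where h: "bij_betw h {..<k} K"
    using finite_same_card_bij[of "{..<k}" K] K(3) by auto
  define E' where "E' = (\<lambda>e. h ` e) ` {e. e \<subseteq> {..<k} \<and> card e = 2}"
  have edge: "h ` e \<subseteq> K \<and> card (h ` e) = 2 \<and> h ` e \<in> E" if "e \<subseteq> {..<k}" "card e = 2" for e
  proof -
    obtain i j where ij: "e = {i, j}" "i \<noteq> j"
      using \<open>card e = 2\<close> card_2_iff by metis
    have "i < k" "j < k"
      using that ij by auto
    then have "h i \<noteq> h j" "h i \<in> K" "h j \<in> K"
      using bij_betw_apply[OF h] inj_on_eq_iff[OF bij_betw_imp_inj_on[OF h]] ij(2) by auto
    then show ?thesis
      using K(2) ij unfolding clique_def by auto
  qed
  have "subgraph (K, E') (V, E)"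
    unfolding subgraph_def simple_graph_def E'_def using \<open>finite K\<close> K(1) edge by auto
  moreover have "graph_iso (K, E') (complete_graph k)"
    using graph_iso_sym[OF graph_iso_bij_image[OF h]] unfolding E'_def complete_graph_def by auto
  ultimately show ?thesis
    unfolding free_of_def by blast
qed

lemma simple_graph_turan_graph: "simple_graph (turan_graph r n)"
  unfolding simple_graph_def turan_graph_def by (auto simp: card_2_iff)

lemma neighbors_turan_graph:
  assumes "v < n"
  shows "neighbors (snd (turan_graph r n)) v = {u\<in>{..<n}. u mod r \<noteq> v mod r}"
proof (intro set_eqI iffI)
  fix u assume "u \<in> neighbors (snd (turan_graph r n)) v"
  then obtain i j where "{v, u} = {i, j}" "i < n" "j < n" "i mod r \<noteq> j mod r"
    unfolding neighbors_def turan_graph_def by auto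
  then show "u \<in> {u\<in>{..<n}. u mod r \<noteq> v mod r}"
    by (auto simp: doubleton_eq_iff)
next
  fix u assume "u \<in> {u\<in>{..<n}. u mod r \<noteq> v mod r}"
  then show "u \<in> neighbors (snd (turan_graph r n)) v"
    using assms unfolding neighbors_def turan_graph_def by auto
qed

lemma clique_turan_graph_card_le:
  assumes "0 < r" and "clique (snd (turan_graph r n)) K"
  shows "card K \<le> r"
proof (cases "finite K")
  case True
  have "inj_on (\<lambda>v. v mod r) K"
  proof (rule inj_onI, rule ccontr)
    fix u v assume "u \<in> K" "v \<in> K" "u mod r = v mod r" "u \<noteq> v"
    then have "{u, v} \<in> snd (turan_graph r n)"
      using assms(2) unfolding clique_def by blast
    then show False
      using \<open>u mod r = v mod r\<close> unfolding turan_graph_def by (auto simp: doubleton_eq_iff)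
  qed
  moreover have "(\<lambda>v. v mod r) ` K \<subseteq> {..<r}"
    using \<open>0 < r\<close> by auto
  ultimately show ?thesis
    using card_inj_on_le[of "\<lambda>v. v mod r" K "{..<r}"] by simp
qed simp

lemma turan_graph_free:
  assumes "0 < r"
  shows "free_of (complete_graph (Suc r)) (turan_graph r n)"
proof -
  have "\<not> (subgraph (V', E') (turan_graph r n) \<and> graph_iso (V', E') (complete_graph (Suc r)))"
    for V' E'
    using complete_graph_copy_imp_clique[of V' E' _ "snd (turan_graph r n)"]
      clique_turan_graph_card_le[OF assms, of n V'] by (auto simp: turan_graph_def)
  then show ?thesis
    unfolding free_of_def by auto
qed

section \<open>Degree majorization\<close>

lemma degree_majorization:
  assumes G: "simple_graph (V, E)" and "W \<subseteq> V"
    and "\<And>K. K \<subseteq> W \<Longrightarrow> clique E K \<Longrightarrow> card K \<le> r"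
  shows "\<exists>p. p ` W \<subseteq> {..<r} \<and> (\<forall>v\<in>W. card (neighbors E v \<inter> W) \<le> card {u\<in>W. p u \<noteq> p v})"
  using assms(2,3)
proof (induction r arbitrary: W)
  case 0
  have "v \<notin> W" for v
    using "0.prems"(2)[of "{v}"] by (auto simp: clique_def)
  then have "W = {}"
    by blast
  then show ?case
    by simp
next
  case (Suc r)
  show ?case
  proof (cases "W = {}")
    case False
    have "finite W"
      using finite_subset[OF Suc.prems(1)] G unfolding simple_graph_def by simp
    define d where "d v = card (neighbors E v \<inter> W)" for v
    have "Max (d ` W) \<in> d ` W"
      using \<open>finite W\<close> False by simp
    then obtain x where x: "x \<in> W" "d x = Max (d ` W)"
      by auto
    define A where "A = neighbors E x \<inter> W"
    have "A \<subseteq> W" and "finite A"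
      unfolding A_def using \<open>finite W\<close> by auto
    have "card K \<le> r" if "K \<subseteq> A" "clique E K" for K
    proof -
      have "x \<notin> K" "finite K"
        using that(1) not_in_neighbors[OF G] finite_subset[OF that(1) \<open>finite A\<close>]
        unfolding A_def by auto
      moreover have "card (insert x K) \<le> Suc r"
        using that x(1) by (intro Suc.prems(2) clique_insert_center) (auto simp: A_def)
      ultimately show ?thesis by simp
    qed
    then obtain q where q: "q ` A \<subseteq> {..<r}"
      "\<forall>v\<in>A. card (neighbors E v \<inter> A) \<le> card {u\<in>A. q u \<noteq> q v}"
      using Suc.IH \<open>A \<subseteq> W\<close> Suc.prems(1) by (meson order_trans)
    define p where "p v = (if v \<in> A then q v else r)" for v
    have "card (neighbors E v \<inter> W) \<le> card {u\<in>W. p u \<noteq> p v}" if "v \<in> W" for v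
    proof (cases "v \<in> A")
      case True
      have "{u\<in>W. p u \<noteq> p v} = {u\<in>A. q u \<noteq> q v} \<union> (W - A)"
        using True q(1) \<open>A \<subseteq> W\<close> unfolding p_def by auto
      then have parts: "card {u\<in>W. p u \<noteq> p v} = card {u\<in>A. q u \<noteq> q v} + card (W - A)"
        using \<open>finite W\<close> \<open>finite A\<close> by (simp only:) (rule card_Un_disjoint; auto)
      have "card (neighbors E v \<inter> W) \<le> card ((neighbors E v \<inter> A) \<union> (W - A))"
        using \<open>finite W\<close> \<open>finite A\<close> by (intro card_mono) auto
      also have "\<dots> \<le> card (neighbors E v \<inter> A) + card (W - A)"
        by (rule card_Un_le)
      also have "\<dots> \<le> card {u\<in>W. p u \<noteq> p v}"
        using q(2) True parts by simp
      finally show ?thesis .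
    next
      case False
      have "{u\<in>W. p u \<noteq> p v} = A"
        using False q(1) \<open>A \<subseteq> W\<close> unfolding p_def by force
      moreover have "d v \<le> d x"
        using x \<open>finite W\<close> \<open>v \<in> W\<close> by simp
      ultimately show ?thesis
        unfolding d_def A_def by simp
    qed
    moreover have "p ` W \<subseteq> {..<Suc r}"
      using q(1) unfolding p_def by auto
    ultimately show ?thesis by blast
  qed simp
qed

lemma sum_over_parts:
  fixes p :: "'a \<Rightarrow> nat"
  assumes "finite W" and "p ` W \<subseteq> {..<r}"
  shows "(\<Sum>v\<in>W. f (card {u\<in>W. p u \<noteq> p v}))
    = (\<Sum>i<r. card {v\<in>W. p v = i} * f (card W - card {v\<in>W. p v = i}))"
proof -
  have "card {u\<in>W. p u \<noteq> i} = card W - card {v\<in>W. p v = i}" for i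
  proof -
    have "{u\<in>W. p u \<noteq> i} = W - {v\<in>W. p v = i}"
      by auto
    then show ?thesis
      using assms(1) by (simp add: card_Diff_subset)
  qed
  then show ?thesis
    unfolding sum.group[OF assms(1) finite_lessThan assms(2), symmetric] by simp
qed

section \<open>Counting stars\<close>

definition star_at :: "'a \<Rightarrow> 'a set \<Rightarrow> 'a graph" where
  "star_at v L = (insert v L, (\<lambda>u. {v, u}) ` L)"

lemma star_graph_Suc: "star_graph (Suc k) = ({..<Suc k}, (\<lambda>i. {0, i}) ` {1..k})"
  unfolding star_graph_def by auto

lemma star_at_copy:
  assumes G: "simple_graph (V, E)" and "v \<in> V" and L: "L \<subseteq> neighbors E v" "card L = k"
  shows "subgraph (star_at v L) (V, E) \<and> graph_iso (star_at v L) (star_graph (Suc k))"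
proof -
  have "finite L" "v \<notin> L" "L \<subseteq> V"
    using L(1) finite_subset[OF L(1) finite_neighbors[OF G]] not_in_neighbors[OF G]
      neighbors_subset[OF G] by auto
  then obtain h where h: "bij_betw h {1..k} L"
    using finite_same_card_bij[of "{1..k}" L] L(2) by auto
  define g where "g = h(0 := v)"
  have "bij_betw g {1..k} L = bij_betw h {1..k} L"
    unfolding g_def by (rule bij_betw_cong) simp
  then have "bij_betw g ({1..k} \<union> {0}) (L \<union> {g 0})"
    using h \<open>v \<notin> L\<close> by (intro notIn_Un_bij_betw) (simp_all add: g_def)
  moreover have "{1..k} \<union> {0} = {..<Suc k}"
    by auto
  ultimately have g: "bij_betw g {..<Suc k} (insert v L)"
    by (simp add: g_def)
  have "(\<lambda>e. g ` e) ` (\<lambda>i. {0, i}) ` {1..k} = (\<lambda>i. {v, h i}) ` {1..k}"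
    unfolding image_image g_def by (intro image_cong) auto
  also have "\<dots> = (\<lambda>u. {v, u}) ` L"
    unfolding bij_betw_imp_surj_on[OF h, symmetric] image_image ..
  finally have edges: "(\<lambda>e. g ` e) ` (\<lambda>i. {0, i}) ` {1..k} = (\<lambda>u. {v, u}) ` L" .
  have "graph_iso (star_graph (Suc k)) (star_at v L)"
    unfolding star_graph_Suc star_at_def edges[symmetric] by (rule graph_iso_bij_image[OF g])
  then have "graph_iso (star_at v L) (star_graph (Suc k))"
    by (rule graph_iso_sym) (auto simp: star_graph_Suc)
  moreover have "subgraph (star_at v L) (V, E)"
    using \<open>finite L\<close> \<open>v \<notin> L\<close> \<open>L \<subseteq> V\<close> \<open>v \<in> V\<close> L(1)
    unfolding subgraph_def simple_graph_def star_at_def neighbors_def by (auto simp: card_insert_if)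
  ultimately show ?thesis by blast
qed

lemma star_copy_is_star_at:
  assumes "subgraph S (V, E)" and "graph_iso S (star_graph (Suc k))"
  shows "\<exists>v\<in>V. \<exists>L. L \<subseteq> neighbors E v \<and> card L = k \<and> S = star_at v L"
proof -
  obtain V' E' where S: "S = (V', E')" by fastforce
  have simple: "simple_graph (V', E')" and sub: "V' \<subseteq> V" "E' \<subseteq> E"
    using assms(1) unfolding S subgraph_def by auto
  obtain g where g: "bij_betw g {..<Suc k} V'" and E': "E' = (\<lambda>e. g ` e) ` (\<lambda>i. {0, i}) ` {1..k}"
    using graph_iso_simple_graphE[OF assms(2)[unfolded S] simple] unfolding star_graph_Suc by auto
  define L where "L = g ` {1..k}"
  have "{..<Suc k} = insert 0 {1..k}"
    by auto
  then have "V' = insert (g 0) L"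
    using bij_betw_imp_surj_on[OF g] unfolding L_def by simp
  moreover have "E' = (\<lambda>u. {g 0, u}) ` L"
    unfolding E' L_def by (auto simp: image_image)
  moreover have "inj_on g {1..k}"
    using bij_betw_imp_inj_on[OF g] by (rule inj_on_subset) auto
  then have "card L = k"
    unfolding L_def by (simp add: card_image)
  ultimately show ?thesis
    using sub unfolding S star_at_def neighbors_def by (intro bexI[of _ "g 0"] exI[of _ L]) auto
qed

lemma star_at_inj:
  assumes "2 \<le> card L" and "star_at v L = star_at w M"
  shows "v = w \<and> L = M"
proof -
  have edges: "(\<lambda>u. {v, u}) ` L = (\<lambda>u. {w, u}) ` M"
    using assms(2) unfolding star_at_def by simp
  have "v = w"
  proof (rule ccontr)
    assume "v \<noteq> w"
    have "L \<subseteq> {w}"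
    proof
      fix u assume "u \<in> L"
      then obtain u' where "{v, u} = {w, u'}"
        using edges by blast
      then show "u \<in> {w}"
        using \<open>v \<noteq> w\<close> by (auto simp: doubleton_eq_iff)
    qed
    then show False
      using assms(1) card_mono[of "{w}" L] by simp
  qed
  moreover have "inj (\<lambda>u. {w, u})"
    by (rule injI) (auto simp: doubleton_eq_iff)
  ultimately show ?thesis
    using edges by (simp add: inj_image_eq_iff)
qed

lemma num_copies_star_graph:
  assumes G: "simple_graph (V, E)" and "2 \<le> k"
  shows "num_copies (star_graph (Suc k)) (V, E) = (\<Sum>v\<in>V. card (neighbors E v) choose k)"
proof -
  define P where "P = (SIGMA v:V. {L. L \<subseteq> neighbors E v \<and> card L = k})"
  have "finite V"
    using G unfolding simple_graph_def by simp
  have copies: "{S. subgraph S (V, E) \<and> graph_iso S (star_graph (Suc k))} = (\<lambda>(v, L). star_at v L) ` P"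
    unfolding P_def using star_copy_is_star_at star_at_copy[OF G] by fastforce
  have "inj_on (\<lambda>(v, L). star_at v L) P"
    unfolding P_def using star_at_inj \<open>2 \<le> k\<close> by (intro inj_onI) fastforce
  then have "num_copies (star_graph (Suc k)) (V, E) = card P"
    unfolding num_copies_def copies by (rule card_image)
  also have "\<dots> = (\<Sum>v\<in>V. card {L. L \<subseteq> neighbors E v \<and> card L = k})"
    unfolding P_def using \<open>finite V\<close> finite_neighbors[OF G] by simp
  also have "\<dots> = (\<Sum>v\<in>V. card (neighbors E v) choose k)"
    using finite_neighbors[OF G] by (simp add: n_subsets)
  finally show ?thesis .
qed

section \<open>Stars in complete tripartite graphs\<close>

text \<open>The number of three-leaf stars centred in a part of size s of a complete multipartite
  graph on n vertices.\<close>

definition part_stars :: "nat \<Rightarrow> nat \<Rightarrow> nat" where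
  "part_stars n s = s * ((n - s) choose 3)"

definition turan_stars :: "nat \<Rightarrow> nat" where
  "turan_stars n = part_stars n (n div 3) + part_stars n ((n + 1) div 3) + part_stars n ((n + 2) div 3)"

lemma six_choose_three: "6 * int (m choose 3) = int m * (int m - 1) * (int m - 2)"
proof -
  have "fact 3 * (of_nat m gchoose 3 :: real) = (\<Prod>i = 0..<3. of_nat m - of_nat i)"
    by (rule gbinomial_mult_fact)
  then have "of_int (6 * int (m choose 3)) = (of_int (int m * (int m - 1) * (int m - 2)) :: real)"
    by (simp add: binomial_gbinomial[symmetric] eval_nat_numeral fact_numeral atLeastLessThanSuc
        algebra_simps)
  then show ?thesis
    by (simp only: of_int_eq_iff)
qed

lemma int_self_le_power: "0 \<le> (u::int) \<Longrightarrow> 0 < k \<Longrightarrow> u \<le> u ^ k"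
  by (cases "u = 0") (simp_all add: self_le_power)

lemma six_part_stars:
  "p \<le> n \<Longrightarrow> 6 * int (part_stars n p) = int p * (int n - int p) * (int n - int p - 1) * (int n - int p - 2)"
  using six_choose_three[of "n - p"] by (simp add: part_stars_def of_nat_diff)

text \<open>Six times the exchange inequality below.  The three cases choose nonnegative parameters
  in which each difference is a sum of manifestly nonnegative terms.\<close>

lemma part_stars_polynomial_exchange:
  fixes n x y z :: int
  assumes "0 \<le> z" "z \<le> y" "y \<le> x" "z + 2 \<le> x" "x + y + z = n"
  defines "Q \<equiv> \<lambda>p. p * (n - p) * (n - p - 1) * (n - p - 2)"
  shows "Q x + Q z \<le> Q (x - 1) + Q (z + 1)"
proof -
  have z: "0 \<le> z^2 - z"
    using int_self_le_power[OF assms(1), of 2] by simp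
  consider (far) "y + 2 \<le> x" | (adjacent) "x = y + 1" | (equal) "x = y"
    using assms(3) by linarith
  then show ?thesis
  proof cases
    case far
    define s t where "s = y - z" and "t = x - y - 2"
    have nx: "n = 3*z + 2*s + t + 2" "x = z + s + t + 2"
      using assms(5) unfolding s_def t_def by simp_all
    have "Q (x - 1) + Q (z + 1) - Q x - Q z
      = (t^3 - t) + 3*(s^2 - s) + 4*(s^3 - s) + 6*s^3 + 3*t*(s^2 - s) + 12*s^2*t + 6*s*t^2
        + 12*(z^2 - z) + 9*t*(z^2 - z) + 3*z^2*t + 3*z*t^2 + 9*z*s + 24*z*s*t + 21*z*s^2
        + 12*z^2*s"
      unfolding Q_def nx by algebra
    moreover have "0 \<le> s" "0 \<le> t" "0 \<le> s^2 - s" "0 \<le> s^3 - s" "0 \<le> t^3 - t"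
      using far assms int_self_le_power[of s] int_self_le_power[of t] unfolding s_def t_def
      by simp_all
    then have "0 \<le> (t^3 - t) + 3*(s^2 - s) + 4*(s^3 - s) + 6*s^3 + 3*t*(s^2 - s) + 12*s^2*t
        + 6*s*t^2 + 12*(z^2 - z) + 9*t*(z^2 - z) + 3*z^2*t + 3*z*t^2 + 9*z*s + 24*z*s*t
        + 21*z*s^2 + 12*z^2*s"
      using assms(1) z by (intro add_nonneg_nonneg mult_nonneg_nonneg zero_le_power) auto
    ultimately show ?thesis
      by linarith
  next
    case adjacent
    define s where "s = x - z - 2"
    have nx: "n = 3*z + 2*s + 3" "x = z + s + 2"
      using adjacent assms(5) unfolding s_def by simp_all
    have "Q (x - 1) + Q (z + 1) - Q x - Q z
      = 8*s + 18*s^2 + 10*s^3 + 6*z + 27*z*s + 21*z*s^2 + 12*z^2 + 12*z^2*s"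
      unfolding Q_def nx by algebra
    moreover have "0 \<le> s"
      using assms unfolding s_def by simp
    then have "0 \<le> 8*s + 18*s^2 + 10*s^3 + 6*z + 27*z*s + 21*z*s^2 + 12*z^2 + 12*z^2*s"
      using assms(1) by (intro add_nonneg_nonneg mult_nonneg_nonneg zero_le_power) auto
    ultimately show ?thesis
      by linarith
  next
    case equal
    define s where "s = x - z - 2"
    have nx: "n = 3*z + 2*s + 4" "x = z + s + 2"
      using equal assms(5) unfolding s_def by simp_all
    have "Q (x - 1) + Q (z + 1) - Q x - Q z
      = 12 + 35*s + 33*s^2 + 10*s^3 + 24*z + 45*z*s + 21*z*s^2 + 12*z^2 + 12*z^2*s"
      unfolding Q_def nx by algebra
    moreover have "0 \<le> s"
      using assms unfolding s_def by simp
    then have "0 \<le> 12 + 35*s + 33*s^2 + 10*s^3 + 24*z + 45*z*s + 21*z*s^2 + 12*z^2 + 12*z^2*s"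
      using assms(1) by (intro add_nonneg_nonneg mult_nonneg_nonneg zero_le_power) auto
    ultimately show ?thesis
      by linarith
  qed
qed

lemma part_stars_exchange:
  assumes "z \<le> y" "y \<le> x" "z + 2 \<le> x" "x + y + z = n"
  shows "part_stars n x + part_stars n z \<le> part_stars n (x - 1) + part_stars n (z + 1)"
proof -
  have "int x - 1 = int (x - 1)" "int z + 1 = int (z + 1)"
    using assms by auto
  then have "6 * int (part_stars n x) + 6 * int (part_stars n z)
      \<le> 6 * int (part_stars n (x - 1)) + 6 * int (part_stars n (z + 1))"
    using part_stars_polynomial_exchange[of "int z" "int y" "int x" "int n"] assms
    by (simp only: six_part_stars)
  then show ?thesis
    by linarith
qed

lemma linorder_triple_sorted_cases:
  fixes P :: "'a::linorder \<Rightarrow> 'a \<Rightarrow> 'a \<Rightarrow> bool"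
  assumes "\<And>x y z. z \<le> y \<Longrightarrow> y \<le> x \<Longrightarrow> P x y z"
    and "\<And>x y z. P x y z \<Longrightarrow> P y x z" and "\<And>x y z. P x y z \<Longrightarrow> P x z y"
  shows "P a b c"
  using assms by (metis linorder_le_cases)

lemma part_stars_le_turan_stars:
  "a + b + c = n \<Longrightarrow> part_stars n a + part_stars n b + part_stars n c \<le> turan_stars n"
proof (induction "a * a + b * b + c * c" arbitrary: a b c rule: less_induct)
  case less
  define P where "P x y z \<longleftrightarrow> (x * x + y * y + z * z = a * a + b * b + c * c \<longrightarrow> x + y + z = n
    \<longrightarrow> part_stars n x + part_stars n y + part_stars n z \<le> turan_stars n)" for x y z
  have "P x y z" if "z \<le> y" "y \<le> x" for x y z
  proof (cases "x \<le> z + 1")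
    case True
    have "x = (n + 2) div 3 \<and> y = (n + 1) div 3 \<and> z = n div 3" if "x + y + z = n"
    proof -
      consider "x = z" "y = z" | "x = z + 1" "y = z" | "x = z + 1" "y = z + 1"
        using \<open>z \<le> y\<close> \<open>y \<le> x\<close> True by linarith
      then show ?thesis
        using that by cases auto
    qed
    then show ?thesis
      unfolding P_def turan_stars_def by auto
  next
    case False
    then obtain x' where x': "x = Suc x'" "z + 1 \<le> x'"
      by (cases x) auto
    have "x' * x' + y * y + (z + 1) * (z + 1) < x * x + y * y + z * z"
      using x' by (simp add: algebra_simps)
    moreover have "part_stars n x + part_stars n z \<le> part_stars n x' + part_stars n (z + 1)"
      if "x + y + z = n"
      using part_stars_exchange[OF \<open>z \<le> y\<close> \<open>y \<le> x\<close> _ that] x' by simp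
    moreover have "x' + y + (z + 1) = x + y + z"
      using x' by simp
    ultimately show ?thesis
      using less.hyps[of x' y "z + 1"] unfolding P_def by fastforce
  qed
  then have "P a b c"
    by (rule linorder_triple_sorted_cases) (auto simp: P_def ac_simps)
  then show ?case
    using less.prems unfolding P_def by blast
qed

section \<open>The extremal number\<close>

lemma card_mod_3_class:
  assumes "i < 3"
  shows "card {v\<in>{..<n}. v mod 3 = i} = (n + 2 - i) div 3"
  using assms
proof (induction n)
  case (Suc n)
  have "{v\<in>{..<Suc n}. v mod 3 = i}
      = (if n mod 3 = i then insert n {v\<in>{..<n}. v mod 3 = i} else {v\<in>{..<n}. v mod 3 = i})"
    by (auto simp: less_Suc_eq)
  moreover have "(Suc n + 2 - i) div 3 = (n + 2 - i) div 3 + (if n mod 3 = i then 1 else 0)"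
  proof -
    consider "i = 0" | "i = 1" | "i = 2"
      using Suc.prems by linarith
    then show ?thesis
      by cases (simp, presburger)+
  qed
  ultimately show ?case
    using Suc by simp
qed simp

lemma turan_graph_star_copies: "num_copies (star_graph 4) (turan_graph 3 n) = turan_stars n"
proof -
  define E where "E = snd (turan_graph 3 n)"
  define R where "R i = {v\<in>{..<n}. v mod 3 = i}" for i
  have T: "turan_graph 3 n = ({..<n}, E)"
    unfolding E_def turan_graph_def by simp
  have "num_copies (star_graph (Suc 3)) ({..<n}, E) = (\<Sum>v<n. card (neighbors E v) choose 3)"
    using simple_graph_turan_graph[of 3 n] unfolding T by (intro num_copies_star_graph) simp_all
  also have "\<dots> = (\<Sum>v<n. card {u\<in>{..<n}. u mod 3 \<noteq> v mod 3} choose 3)"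
    unfolding E_def by (intro sum.cong) (simp_all add: neighbors_turan_graph)
  also have "\<dots> = (\<Sum>i<3. card (R i) * ((card {..<n} - card (R i)) choose 3))"
    unfolding R_def by (rule sum_over_parts) auto
  also have "\<dots> = turan_stars n"
    using card_mod_3_class[of _ n, folded R_def]
    by (simp add: lessThan_nat_numeral turan_stars_def part_stars_def)
  finally show ?thesis
    by (simp add: T)
qed

lemma K4_free_star_copies_le:
  assumes G: "simple_graph (V, E)" and free: "free_of (complete_graph 4) (V, E)"
  shows "num_copies (star_graph 4) (V, E) \<le> turan_stars (card V)"
proof -
  have "finite V"
    using G unfolding simple_graph_def by simp
  have small_cliques: "card K \<le> 3" if "K \<subseteq> V" "clique E K" for K
  proof (rule ccontr)
    assume "\<not> card K \<le> 3"
    then have "4 \<le> card K"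
      by simp
    then obtain K' where "K' \<subseteq> K" "card K' = 4"
      by (rule obtain_subset_with_card_n)
    moreover have "K' \<subseteq> V" "clique E K'"
      using \<open>K' \<subseteq> K\<close> that clique_subset by auto
    ultimately show False
      using clique_imp_complete_graph_copy[OF G] free by metis
  qed
  then obtain p :: "'a \<Rightarrow> nat" where p: "p ` V \<subseteq> {..<3}"
    "\<forall>v\<in>V. card (neighbors E v \<inter> V) \<le> card {u\<in>V. p u \<noteq> p v}"
    using degree_majorization[OF G subset_refl small_cliques] by blast
  define c where "c i = card {v\<in>V. p v = i}" for i
  have "(\<Sum>i<3. c i) = card V"
    unfolding c_def card_eq_sum by (rule sum.group[OF \<open>finite V\<close> finite_lessThan p(1)])
  then have "c 0 + c 1 + c 2 = card V"
    by (simp add: lessThan_nat_numeral)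
  have "num_copies (star_graph 4) (V, E) = (\<Sum>v\<in>V. card (neighbors E v) choose 3)"
    using num_copies_star_graph[OF G, of 3] by simp
  also have "\<dots> \<le> (\<Sum>v\<in>V. card {u\<in>V. p u \<noteq> p v} choose 3)"
    using p(2) neighbors_subset[OF G] by (intro sum_mono binomial_right_mono) (simp add: Int_absorb2)
  also have "\<dots> = (\<Sum>i<3. c i * ((card V - c i) choose 3))"
    unfolding c_def using \<open>finite V\<close> p(1) by (rule sum_over_parts)
  also have "\<dots> = part_stars (card V) (c 0) + part_stars (card V) (c 1) + part_stars (card V) (c 2)"
    by (simp add: lessThan_nat_numeral part_stars_def)
  also have "\<dots> \<le> turan_stars (card V)"
    using part_stars_le_turan_stars \<open>c 0 + c 1 + c 2 = card V\<close> by blast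
  finally show ?thesis .
qed

theorem proposition3p12:
  shows "\<exists>n0. \<forall>n\<ge>n0. gen_ex n (star_graph 4) (complete_graph 4)
            = num_copies (star_graph 4) (turan_graph 3 n)"
proof (intro exI[of _ 0] allI impI)
  fix n :: nat
  let ?copies = "{num_copies (star_graph 4) G | G :: nat graph.
      simple_graph G \<and> fst G = {..<n} \<and> free_of (complete_graph 4) G}"
  have "simple_graph (turan_graph 3 n)" "fst (turan_graph 3 n) = {..<n}"
    "free_of (complete_graph 4) (turan_graph 3 n)"
    using simple_graph_turan_graph turan_graph_free[of 3 n] by (simp_all add: turan_graph_def)
  then have turan: "num_copies (star_graph 4) (turan_graph 3 n) \<in> ?copies"
    by blast
  have bound: "c \<le> num_copies (star_graph 4) (turan_graph 3 n)" if c: "c \<in> ?copies" for c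
  proof -
    obtain V E where "c = num_copies (star_graph 4) (V, E)" "simple_graph (V, E)" "V = {..<n}"
      "free_of (complete_graph 4) (V, E)"
      using c by auto
    then have "c \<le> turan_stars n"
      using K4_free_star_copies_le[of V E] by simp
    then show ?thesis
      by (simp add: turan_graph_star_copies)
  qed
  have "finite ?copies"
    using bound finite_nat_set_iff_bounded_le by blast
  then show "gen_ex n (star_graph 4) (complete_graph 4) = num_copies (star_graph 4) (turan_graph 3 n)"
    unfolding gen_ex_def using turan bound by (intro Max_eqI)
qed

end
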